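(* Let $N\ge2$, $\lambda>0$, $\mu\in\mathbb R$, $\sigma>0$. Let $\Delta S_1\sim\mathcal N(\mu,\sigma^2)$ and $\hat\mu\sim\mathcal N(\mu,\sigma^2/N)$ be independent, and let $a_{\mathrm{plug\text{-}in}}:=\hat\mu/(\lambda\sigma^2)$. Then \[ \mathrm{MeanVar}_\lambda\big(a_{\mathrm{plug\text{-}in}}\,\Delta S_1\big)=\frac{\mu^2}{2\lambda\sigma^2}-\frac{\mu^2+\sigma^2}{2N\lambda\sigma^2}. \]
   Context: $\mathrm{MeanVar}_\lambda(X):=\mathbb E[X]-\frac\lambda2\mathbb V[X]$, with expectation and variance under the joint law of $(\hat\mu,\Delta S_1)$. Here $\hat\mu$ plays the role of the sample-mean drift estimate from $N$ past i.i.d. $\mathcal N(\mu,\sigma^2)$ increments and $\Delta S_1$ is the next increment; $a_{\mathrm{plug\text{-}in}}$ is the plug-in investment amount for the entropic objective when the variance is assumed known. *)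

theory Defs
  imports "HOL-Probability.Probability"
begin

definition MeanVar :: "'a measure \<Rightarrow> real \<Rightarrow> ('a \<Rightarrow> real) \<Rightarrow> real" where
  "MeanVar M lam X =
     prob_space.expectation M X - lam / 2 * prob_space.variance M X"

end

(* Independence factorises the moments of the product: E[dS muhat] = mu^2 and
   E[(dS muhat)^2] = (sigma^2 + mu^2) (sigma^2/N + mu^2), so the variance of the plug-in
   position is c^2 (sigma^4/N + sigma^2 mu^2 (1 + 1/N)) with c = 1/(lam sigma^2), and the
   formula follows because MeanVar is linear in the mean and quadratic in the scale. *)
theory Submission
  imports Defs
begin

lemma (in prob_space) normal_distributed_integrable:
  assumes "0 < s" and D: "distributed M lborel X (normal_density m s)"
  shows "integrable M X"
  using distributed_integrable_var[OF D _ integrable_normal_moment_nz_1[OF \<open>0 < s\<close>]] by simp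

lemma (in prob_space) normal_distributed_square_integrable:
  assumes "0 < s" and D: "distributed M lborel X (normal_density m s)"
  shows "integrable M (\<lambda>x. (X x)\<^sup>2)"
proof -
  have "integrable lborel (\<lambda>x. normal_density m s x * (x - m)\<^sup>2
      + 2 * m * (normal_density m s x * x) - m\<^sup>2 * normal_density m s x)"
    using integrable_normal_moment[OF \<open>0 < s\<close>, of m 2] integrable_normal_moment_nz_1[OF \<open>0 < s\<close>, of m]
      integrable_normal_density[OF \<open>0 < s\<close>, of m]
    by (intro Bochner_Integration.integrable_diff Bochner_Integration.integrable_add
          integrable_mult_right) auto
  also have "(\<lambda>x. normal_density m s x * (x - m)\<^sup>2
      + 2 * m * (normal_density m s x * x) - m\<^sup>2 * normal_density m s x)
      = (\<lambda>x. normal_density m s x * x\<^sup>2)"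
    by (simp add: power2_eq_square algebra_simps)
  finally show ?thesis
    using distributed_integrable[OF D, of "\<lambda>x. x\<^sup>2"] by simp
qed

lemma (in prob_space) normal_distributed_second_moment:
  assumes "0 < s" and D: "distributed M lborel X (normal_density m s)"
  shows "expectation (\<lambda>x. (X x)\<^sup>2) = s\<^sup>2 + m\<^sup>2"
  using variance_eq[OF normal_distributed_integrable[OF assms] normal_distributed_square_integrable[OF assms]]
    normal_distributed_variance[OF assms] normal_distributed_expectation[OF assms]
  by simp

lemma (in prob_space) variance_scale:
  fixes X :: "'a \<Rightarrow> real"
  shows "variance (\<lambda>x. c * X x) = c\<^sup>2 * variance X"
proof -
  have "(\<lambda>x. (c * X x - expectation (\<lambda>x. c * X x))\<^sup>2) = (\<lambda>x. c\<^sup>2 * (X x - expectation X)\<^sup>2)"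
    by (simp add: power2_eq_square algebra_simps)
  then show ?thesis by simp
qed

lemma (in prob_space) indep_var_variance_mult:
  fixes X Y :: "'a \<Rightarrow> real"
  assumes XY: "indep_var borel X borel Y"
    and X2: "integrable M (\<lambda>x. (X x)\<^sup>2)" and Y2: "integrable M (\<lambda>x. (Y x)\<^sup>2)"
  shows "variance (\<lambda>x. X x * Y x) =
           expectation (\<lambda>x. (X x)\<^sup>2) * expectation (\<lambda>x. (Y x)\<^sup>2) - (expectation X * expectation Y)\<^sup>2"
proof -
  have X: "integrable M X"
    using square_integrable_imp_integrable[OF _ X2] indep_var_rv1[OF XY] by simp
  have Y: "integrable M Y"
    using square_integrable_imp_integrable[OF _ Y2] indep_var_rv2[OF XY] by simp
  have XY2: "indep_var borel (\<lambda>x. (X x)\<^sup>2) borel (\<lambda>x. (Y x)\<^sup>2)"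
    using indep_var_compose[OF XY, of "\<lambda>x. x\<^sup>2" borel "\<lambda>x. x\<^sup>2" borel] by (simp add: comp_def)
  have sq: "(\<lambda>x. (X x * Y x)\<^sup>2) = (\<lambda>x. (X x)\<^sup>2 * (Y x)\<^sup>2)"
    by (simp add: power_mult_distrib)
  show ?thesis
    using variance_eq[OF indep_var_integrable[OF XY X Y]] indep_var_integrable[OF XY2 X2 Y2]
      indep_var_lebesgue_integral[OF XY X Y] indep_var_lebesgue_integral[OF XY2 X2 Y2]
    unfolding sq by simp
qed

lemma MeanVar_scale:
  assumes "prob_space M"
  shows "MeanVar M lam (\<lambda>x. c * X x) =
           c * prob_space.expectation M X - lam / 2 * c\<^sup>2 * prob_space.variance M X"
proof -
  interpret prob_space M by (rule assms)
  show ?thesis by (simp only: MeanVar_def variance_scale) simp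
qed

theorem lemmaB3:
  fixes M :: "'a measure" and N :: nat and lam mu sigma :: real
    and dS muhat :: "'a \<Rightarrow> real"
  assumes "prob_space M"
    and "N \<ge> 2" and "lam > 0" and "sigma > 0"
    and "distributed M lborel dS (normal_density mu sigma)"
    and "distributed M lborel muhat (normal_density mu (sigma / sqrt (real N)))"
    and "prob_space.indep_var M borel dS borel muhat"
  shows "MeanVar M lam (\<lambda>\<omega>. (muhat \<omega> / (lam * sigma\<^sup>2)) * dS \<omega>) =
           mu\<^sup>2 / (2 * lam * sigma\<^sup>2) - (mu\<^sup>2 + sigma\<^sup>2) / (2 * real N * lam * sigma\<^sup>2)"
proof -
  interpret prob_space M by (rule assms(1))
  have "real N > 0" using assms(2) by simp
  then have "sigma / sqrt (real N) > 0" using assms(4) by simp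
  note dS = assms(4,5) and muhat = this assms(6)
  have E: "expectation (\<lambda>\<omega>. dS \<omega> * muhat \<omega>) = mu\<^sup>2"
    using indep_var_lebesgue_integral[OF assms(7)] normal_distributed_integrable[OF dS]
      normal_distributed_integrable[OF muhat] normal_distributed_expectation[OF dS]
      normal_distributed_expectation[OF muhat]
    by (simp add: power2_eq_square)
  have V: "variance (\<lambda>\<omega>. dS \<omega> * muhat \<omega>) = (sigma\<^sup>2 + mu\<^sup>2) * (sigma\<^sup>2 / real N + mu\<^sup>2) - mu\<^sup>2 * mu\<^sup>2"
    using indep_var_variance_mult[OF assms(7)] normal_distributed_square_integrable[OF dS]
      normal_distributed_square_integrable[OF muhat] normal_distributed_second_moment[OF dS]
      normal_distributed_second_moment[OF muhat] normal_distributed_expectation[OF dS]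
      normal_distributed_expectation[OF muhat] \<open>real N > 0\<close>
    by (simp add: power_divide power2_eq_square)
  have scaled: "(\<lambda>\<omega>. muhat \<omega> / (lam * sigma\<^sup>2) * dS \<omega>) = (\<lambda>\<omega>. 1 / (lam * sigma\<^sup>2) * (dS \<omega> * muhat \<omega>))"
    by auto
  show ?thesis
    \<comment> \<open>V must be unfolded before E: the abbreviation variance contains the expectation.\<close>
    unfolding scaled MeanVar_scale[OF assms(1)] V unfolding E
    using assms(3,4) \<open>real N > 0\<close> by (simp add: field_simps power2_eq_square)
qed

end
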